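(* Let $s$ be a stream type and $p$ a prefix with $p : s$. If $s$ is nullable, then $p = \mathrm{emp}(s)$.
   Context: Stream types are generated by $s,t ::= 1 \mid \varepsilon \mid s\cdot t \mid s\,\|\,t \mid s+t \mid s^\star$. Prefixes are generated by $p ::= \mathtt{oneEmp} \mid \mathtt{oneFull} \mid \mathtt{epsEmp} \mid \mathtt{par}(p,p') \mid \mathtt{catA}(p) \mid \mathtt{catB}(p,p') \mid \mathtt{sumEmp} \mid \mathtt{inl}(p) \mid \mathtt{inr}(p) \mid \mathtt{starEmp} \mid \mathtt{starDone} \mid \mathtt{stA}(p) \mid \mathtt{stB}(p,p')$. Maximality (inductive): $\mathtt{epsEmp}$, $\mathtt{oneFull}$, $\mathtt{starDone}$ are maximal; $\mathtt{par}(p_1,p_2)$, $\mathtt{catB}(p_1,p_2)$, $\mathtt{stB}(p_1,p_2)$ are maximal if $p_1$ and $p_2$ are; $\mathtt{inl}(p)$, $\mathtt{inr}(p)$ are maximal if $p$ is. Prefix typing $p : s$ (inductive): $\mathtt{epsEmp}:\varepsilon$; $\mathtt{oneEmp}:1$; $\mathtt{oneFull}:1$; $\mathtt{par}(p_1,p_2): s\|t$ if $p_1:s$, $p_2:t$; $\mathtt{catA}(p): s\cdot t$ if $p:s$; $\mathtt{catB}(p_1,p_2): s\cdot t$ if $p_1:s$, $p_1$ maximal, $p_2:t$; $\mathtt{sumEmp}: s+t$; $\mathtt{inl}(p):s+t$ if $p:s$; $\mathtt{inr}(p):s+t$ if $p:t$; $\mathtt{starEmp}:s^\star$; $\mathtt{starDone}:s^\star$;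 $\mathtt{stA}(p):s^\star$ if $p:s$; $\mathtt{stB}(p,p'):s^\star$ if $p:s$, $p$ maximal, $p':s^\star$. Nullability (inductive): $\varepsilon$ is nullable; $s\|t$ is nullable if $s$ and $t$ are; nothing else is nullable. The empty prefix: $\mathrm{emp}(\varepsilon)=\mathtt{epsEmp}$, $\mathrm{emp}(1)=\mathtt{oneEmp}$, $\mathrm{emp}(s\|t)=\mathtt{par}(\mathrm{emp}(s),\mathrm{emp}(t))$, $\mathrm{emp}(s+t)=\mathtt{sumEmp}$, $\mathrm{emp}(s\cdot t)=\mathtt{catA}(\mathrm{emp}(s))$, $\mathrm{emp}(s^\star)=\mathtt{starEmp}$. *)

theory Defs
  imports Main
begin

datatype stype = One | Eps | Cat stype stype | Par stype stype | Sum stype stype | Star stype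

datatype prefix = OneEmp | OneFull | EpsEmp | PrePar prefix prefix | CatA prefix
  | CatB prefix prefix | SumEmp | Inl prefix | Inr prefix | StarEmp | StarDone
  | StA prefix | StB prefix prefix

inductive maximal :: "prefix \<Rightarrow> bool" where
  "maximal EpsEmp"
| "maximal OneFull"
| "maximal StarDone"
| "maximal p1 \<Longrightarrow> maximal p2 \<Longrightarrow> maximal (PrePar p1 p2)"
| "maximal p1 \<Longrightarrow> maximal p2 \<Longrightarrow> maximal (CatB p1 p2)"
| "maximal p1 \<Longrightarrow> maximal p2 \<Longrightarrow> maximal (StB p1 p2)"
| "maximal p \<Longrightarrow> maximal (Inl p)"
| "maximal p \<Longrightarrow> maximal (Inr p)"

inductive has_type :: "prefix \<Rightarrow> stype \<Rightarrow> bool" where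
  "has_type EpsEmp Eps"
| "has_type OneEmp One"
| "has_type OneFull One"
| "has_type p1 s \<Longrightarrow> has_type p2 t \<Longrightarrow> has_type (PrePar p1 p2) (Par s t)"
| "has_type p s \<Longrightarrow> has_type (CatA p) (Cat s t)"
| "has_type p1 s \<Longrightarrow> maximal p1 \<Longrightarrow> has_type p2 t \<Longrightarrow> has_type (CatB p1 p2) (Cat s t)"
| "has_type SumEmp (Sum s t)"
| "has_type p s \<Longrightarrow> has_type (Inl p) (Sum s t)"
| "has_type p t \<Longrightarrow> has_type (Inr p) (Sum s t)"
| "has_type StarEmp (Star s)"
| "has_type StarDone (Star s)"
| "has_type p s \<Longrightarrow> has_type (StA p) (Star s)"
| "has_type p s \<Longrightarrow> maximal p \<Longrightarrow> has_type p' (Star s) \<Longrightarrow> has_type (StB p p') (Star s)"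

inductive nullable :: "stype \<Rightarrow> bool" where
  "nullable Eps"
| "nullable s \<Longrightarrow> nullable t \<Longrightarrow> nullable (Par s t)"

fun emp :: "stype \<Rightarrow> prefix" where
  "emp Eps = EpsEmp"
| "emp One = OneEmp"
| "emp (Par s t) = PrePar (emp s) (emp t)"
| "emp (Sum s t) = SumEmp"
| "emp (Cat s t) = CatA (emp s)"
| "emp (Star s) = StarEmp"

end

theory Submission
  imports Defs
begin

inductive_cases has_type_EpsE: "has_type p Eps"
inductive_cases has_type_ParE: "has_type p (Par s t)"

theorem mainTheorem5:
  assumes "has_type p s" and "nullable s"
  shows "p = emp s"
  using assms(2,1)
proof (induction s arbitrary: p rule: nullable.induct)
  case 1
  then show ?case by (auto elim: has_type_EpsE)
next
  case (2 s t)
  from \<open>has_type p (Par s t)\<close> obtain p1 p2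
    where "p = PrePar p1 p2" and "has_type p1 s" and "has_type p2 t"
    by (rule has_type_ParE)
  with "2.IH" show ?case by simp
qed

end
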